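(* Let $\circ$ be an alternative operation on $V=\mathbb{F}_2^m$ (in the sense of the context). Then for every $\lambda\in H_\circ$ one has $W_\circ\lambda=W_\circ$ and $U_\circ\lambda=U_\circ$.
   Context: Vectors of $V=\mathbb{F}_2^m$ are row vectors and maps are written in postfix notation ($xf$ is the image of $x$ under $f$). $+$ denotes the usual (xor) addition. An alternative operation on $V$ is defined from an elementary abelian $2$-subgroup $T<\mathrm{AGL}(V,+)$ acting regularly on $V$: writing $\tau_a$ for the unique element of $T$ with $0\tau_a=a$, set $a\circ b:=a\tau_b$; then $(V,\circ)$ is an elementary abelian $2$-group whose translation group is $T_\circ=T$. $\mathrm{AGL}(V,\circ)$ denotes the normaliser of $T_\circ$ in $\mathrm{Sym}(V)$ and $\mathrm{GL}(V,\circ)$ its stabiliser of $0$. It is assumed that the xor-translation group $T_+=\{x\mapsto x+a : a\in V\}$ is contained in $\mathrm{AGL}(V,\circ)$. The weak key space is $W_\circ=\{k\in V : x\circ k=x+k \text{ for all } x\in V\}$. The product is $a\cdot b:=a+b+a\circ b$ and the error space is $U_\circ=\{a\cdot b: a,b\in V\}$. Finally $H_\circ:=\mathrm{GL}(V,+)\cap\mathrm{GL}(V,\circ)$, i.e. the xor-linear bijections $f$ with $(a\circ b)f=af\circ bf$ for all $a,b$. *)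

theory Defs
  imports Main
begin

text \<open>V = F_2^m is modelled as the type 'n \<Rightarrow> bool with 'n a finite type, m = CARD('n);
  a vector is its coordinate function, True meaning 1.\<close>

type_synonym 'n vec2 = "'n \<Rightarrow> bool"

definition vadd :: "'n vec2 \<Rightarrow> 'n vec2 \<Rightarrow> 'n vec2" where
  "vadd a b = (\<lambda>i. a i \<noteq> b i)"

definition vzero :: "'n vec2" where
  "vzero = (\<lambda>i. False)"

text \<open>xor-linear maps (over F_2, additivity is linearity).\<close>
definition xlinear :: "('n vec2 \<Rightarrow> 'n vec2) \<Rightarrow> bool" where
  "xlinear f \<longleftrightarrow> (\<forall>a b. f (vadd a b) = vadd (f a) (f b))"

definition affine_map :: "('n vec2 \<Rightarrow> 'n vec2) \<Rightarrow> bool" where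
  "affine_map g \<longleftrightarrow> (\<exists>L c. xlinear L \<and> bij L \<and> g = (\<lambda>x. vadd (L x) c))"

definition alt_translation_group :: "('n vec2 \<Rightarrow> 'n vec2) set \<Rightarrow> bool" where
  "alt_translation_group T \<longleftrightarrow>
     (\<forall>t\<in>T. affine_map t) \<and> id \<in> T \<and>
     (\<forall>s\<in>T. \<forall>t\<in>T. s \<circ> t \<in> T) \<and>
     (\<forall>t\<in>T. t \<circ> t = id) \<and>
     (\<forall>s\<in>T. \<forall>t\<in>T. s \<circ> t = t \<circ> s) \<and>
     (\<forall>x y. \<exists>!t. t \<in> T \<and> t x = y)"

definition tau :: "('n vec2 \<Rightarrow> 'n vec2) set \<Rightarrow> 'n vec2 \<Rightarrow> ('n vec2 \<Rightarrow> 'n vec2)" where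
  "tau T a = (THE t. t \<in> T \<and> t vzero = a)"

text \<open>a \<circ> b := a \<tau>_b (postfix application).\<close>
definition circ :: "('n vec2 \<Rightarrow> 'n vec2) set \<Rightarrow> 'n vec2 \<Rightarrow> 'n vec2 \<Rightarrow> 'n vec2" where
  "circ T a b = tau T b a"

definition xor_translation :: "'n vec2 \<Rightarrow> ('n vec2 \<Rightarrow> 'n vec2)" where
  "xor_translation c = (\<lambda>x. vadd x c)"

text \<open>T_+ is contained in AGL(V,\<circ>), the normaliser of T in Sym(V).\<close>
definition xor_translations_normalise :: "('n vec2 \<Rightarrow> 'n vec2) set \<Rightarrow> bool" where
  "xor_translations_normalise T \<longleftrightarrow>
     (\<forall>c. (\<lambda>t. inv (xor_translation c) \<circ> t \<circ> xor_translation c) ` T = T)"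

definition weak_keys :: "('n vec2 \<Rightarrow> 'n vec2) set \<Rightarrow> 'n vec2 set" where
  "weak_keys T = {k. \<forall>x. circ T x k = vadd x k}"

definition error_space :: "('n vec2 \<Rightarrow> 'n vec2) set \<Rightarrow> 'n vec2 set" where
  "error_space T = {vadd (vadd a b) (circ T a b) | a b. True}"

definition H_circ :: "('n vec2 \<Rightarrow> 'n vec2) set \<Rightarrow> ('n vec2 \<Rightarrow> 'n vec2) set" where
  "H_circ T = {f. bij f \<and> xlinear f \<and> (\<forall>a b. f (circ T a b) = circ T (f a) (f b))}"

end

theory Submission
  imports Defs
begin

(* Every lam in H_circ T is an automorphism of both (V,+) and (V,\<circ>), so it maps the sets
   W and U, which are defined from + and \<circ> alone, into themselves. Since H_circ T is closed
   under inverses, the same holds for inv lam, and the two inclusions give equality.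
   No hypothesis on T is needed for this. *)

lemma inv_hom_of_bij_hom:
  assumes "bij f" and "\<And>a b. f (g a b) = g (f a) (f b)"
  shows "inv f (g a b) = g (inv f a) (inv f b)"
proof (rule inv_f_eq)
  show "inj f" using assms(1) by (rule bij_is_inj)
  show "f (g (inv f a) (inv f b)) = g a b"
    using assms by (simp add: bij_is_surj surj_f_inv_f)
qed

lemma inv_in_H_circ:
  assumes "lam \<in> H_circ T"
  shows "inv lam \<in> H_circ T"
  using assms
  by (simp add: H_circ_def xlinear_def bij_imp_bij_inv inv_hom_of_bij_hom[where g = vadd]
      inv_hom_of_bij_hom[where g = "circ T"])

lemma image_eq_if_bij_and_inv_image_subset:
  assumes "bij f" and "f ` A \<subseteq> A" and "inv f ` A \<subseteq> A"
  shows "f ` A = A"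
proof
  have "A = f ` inv f ` A" using assms(1) by (simp add: bij_is_surj image_f_inv_f)
  also have "\<dots> \<subseteq> f ` A" using assms(3) by (rule image_mono)
  finally show "A \<subseteq> f ` A" .
qed (fact assms(2))

lemma H_circ_image_weak_keys_subset:
  assumes "lam \<in> H_circ T"
  shows "lam ` weak_keys T \<subseteq> weak_keys T"
proof (rule image_subsetI)
  fix k assume "k \<in> weak_keys T"
  then have weak: "circ T x k = vadd x k" for x by (simp add: weak_keys_def)
  from assms have "surj lam" and lin: "\<And>a b. lam (vadd a b) = vadd (lam a) (lam b)"
    and hom: "\<And>a b. lam (circ T a b) = circ T (lam a) (lam b)"
    by (auto simp: H_circ_def xlinear_def bij_is_surj)
  have "circ T y (lam k) = vadd y (lam k)" for y
  proof -
    obtain x where y: "y = lam x" using \<open>surj lam\<close> by (metis surjD)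
    have "circ T y (lam k) = lam (circ T x k)" by (simp add: y hom)
    also have "\<dots> = vadd y (lam k)" by (simp add: weak lin y)
    finally show ?thesis .
  qed
  then show "lam k \<in> weak_keys T" by (simp add: weak_keys_def)
qed

lemma H_circ_image_error_space_subset:
  assumes "lam \<in> H_circ T"
  shows "lam ` error_space T \<subseteq> error_space T"
proof (rule image_subsetI)
  fix u assume "u \<in> error_space T"
  then obtain a b where u: "u = vadd (vadd a b) (circ T a b)" by (auto simp: error_space_def)
  from assms have "lam u = vadd (vadd (lam a) (lam b)) (circ T (lam a) (lam b))"
    by (simp add: u H_circ_def xlinear_def)
  then show "lam u \<in> error_space T" by (auto simp: error_space_def)
qed

lemma H_circ_image_eq_if_subset:
  assumes "lam \<in> H_circ T" and "\<And>f. f \<in> H_circ T \<Longrightarrow> f ` A \<subseteq> A"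
  shows "lam ` A = A"
proof (rule image_eq_if_bij_and_inv_image_subset)
  show "bij lam" using assms(1) by (simp add: H_circ_def)
  show "lam ` A \<subseteq> A" using assms by blast
  show "inv lam ` A \<subseteq> A" using assms by (blast intro: inv_in_H_circ)
qed

theorem lemma1:
  fixes T :: "(('n::finite) vec2 \<Rightarrow> 'n vec2) set" and lam :: "'n vec2 \<Rightarrow> 'n vec2"
  assumes "alt_translation_group T"
    and "xor_translations_normalise T"
    and "lam \<in> H_circ T"
  shows "lam ` weak_keys T = weak_keys T \<and> lam ` error_space T = error_space T"
  using assms(3)
  by (simp add: H_circ_image_eq_if_subset H_circ_image_weak_keys_subset
      H_circ_image_error_space_subset)

end
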